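(* Let $h(x)=\mathrm{ReLU}(\Gamma^*W^*x+\beta^* )$ be any one-layer ReLU network with $x\in\mathbb{R}^d$, $W^*\in\mathbb{R}^{d\times d}$, $\Gamma^*\in\mathbb{R}^{d\times d}$ diagonal, and $\beta^*\in\mathbb{R}^d$. Consider the two-layer network with batch normalization $$f(x)=\mathrm{ReLU}\Big(\Gamma'\,\frac{V\,\mathrm{ReLU}\big(\Gamma\frac{Wx-\mu}{s}+\beta\big)-\mu'}{s'}+\beta'\Big).$$ Its parameters are: - frozen: $W\in\mathbb{R}^{d^2\times d}$ and $V\in\mathbb{R}^{d\times d^2}$ random; $\mu\in\mathbb{R}^{d^2}$, $\mu'\in\mathbb{R}^d$ and nonzero scalars $s,s'$ fixed; - tunable: diagonal $\Gamma\in\mathbb{R}^{d^2\times d^2}$, $\Gamma'\in\mathbb{R}^{d\times d}$, and vectors $\beta\in\mathbb{R}^{d^2}$, $\beta'\in\mathbb{R}^d$. Then, with probability $1$ over the draw of $W$ and $V$, there exist $\Gamma,\beta,\Gamma',\beta'$ such that $f(x)=h(x)$ for all $x\in\mathbb{R}^d$ with $\|x\|_2\le1$.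
   Context: $\mathrm{ReLU}(t)=\max(t,0)$ is applied entrywise. "Random" matrices have independent, identically distributed entries drawn from an arbitrary continuous and bounded distribution, independently across matrices. In $\frac{Wx-\mu}{s}$ the subtraction is of vectors and the division is by the scalar $s$ (batch statistics are treated as fixed constants). *)

theory Defs
  imports "HOL-Probability.Probability"
begin

definition relu :: "real \<Rightarrow> real" where
  "relu t = max t 0"

definition cont_bounded_dist :: "real measure \<Rightarrow> bool" where
  "cont_bounded_dist D \<longleftrightarrow> prob_space D \<and> sets D = sets borel \<and>
     (\<forall>a. measure D {a} = 0) \<and> (\<exists>B. AE t in D. \<bar>t\<bar> \<le> B)"

text \<open>Target one-layer net h(x) = ReLU(Gamma* W* x + beta*), coordinate i < d.
  The diagonal matrix Gamma* is given by its diagonal gs.\<close>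
definition one_layer :: "nat \<Rightarrow> (nat \<times> nat \<Rightarrow> real) \<Rightarrow> (nat \<Rightarrow> real) \<Rightarrow> (nat \<Rightarrow> real)
    \<Rightarrow> (nat \<Rightarrow> real) \<Rightarrow> nat \<Rightarrow> real" where
  "one_layer d Ws gs bs x i = relu (gs i * (\<Sum>j<d. Ws (i, j) * x j) + bs i)"

text \<open>Two-layer BN net; W is d^2 x d (entries W (k,j)), V is d x d^2 (entries V (i,k)).
  Diagonal Gamma, Gamma' are given by their diagonals g, g'.\<close>
definition bn_two_layer :: "nat \<Rightarrow> (nat \<times> nat \<Rightarrow> real) \<Rightarrow> (nat \<times> nat \<Rightarrow> real)
    \<Rightarrow> (nat \<Rightarrow> real) \<Rightarrow> real \<Rightarrow> (nat \<Rightarrow> real) \<Rightarrow> real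
    \<Rightarrow> (nat \<Rightarrow> real) \<Rightarrow> (nat \<Rightarrow> real) \<Rightarrow> (nat \<Rightarrow> real) \<Rightarrow> (nat \<Rightarrow> real)
    \<Rightarrow> (nat \<Rightarrow> real) \<Rightarrow> nat \<Rightarrow> real" where
  "bn_two_layer d W V mu s mu' s' g b g' b' x i =
     (let z = (\<lambda>k. relu (g k * (((\<Sum>j<d. W (k, j) * x j) - mu k) / s) + b k))
      in relu (g' i * (((\<Sum>k<d^2. V (i, k) * z k) - mu' i) / s') + b' i))"

end

theory Submission
  imports Defs "Jordan_Normal_Form.Determinant"
begin

text \<open>Choose the second-layer scale \<open>\<Gamma>' = s'\<close> and the first-layer shifts \<open>\<beta>\<close> so large that every
  first-layer ReLU stays in its linear regime on the unit ball. Then \<open>f\<close> is the ReLU of an affine map with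
  linear part \<open>V diag(\<gamma>) W / s\<close>, and \<open>\<beta>'\<close> absorbs the constant term. Matching \<open>\<Gamma>*W*\<close> amounts to
  \<open>d\<^sup>2\<close> linear equations \<open>\<Sum>\<^sub>k V\<^sub>i\<^sub>k W\<^sub>k\<^sub>j \<gamma>\<^sub>k = s \<Gamma>*\<^sub>i W*\<^sub>i\<^sub>j\<close> in the \<open>d\<^sup>2\<close> unknowns \<open>\<gamma>\<close>. The
  determinant of this system is a polynomial in the entries of \<open>W\<close> and \<open>V\<close> that does not vanish
  identically (for suitable 0-1 matrices the system matrix is the identity), and the zero set of
  such a polynomial is null for any product of atomless distributions.\<close>

definition atomless_borel_prob :: "real measure \<Rightarrow> bool" where
  "atomless_borel_prob M \<longleftrightarrow> prob_space M \<and> sets M = sets borel \<and> (\<forall>a. measure M {a} = 0)"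

lemma cont_bounded_dist_atomless: "cont_bounded_dist D \<Longrightarrow> atomless_borel_prob D"
  unfolding cont_bounded_dist_def atomless_borel_prob_def by blast

lemma AE_not_in_finite:
  assumes M: "atomless_borel_prob M" and "finite F"
  shows "AE t in M. t \<notin> F"
proof (rule AE_I')
  interpret prob_space M using M by (simp add: atomless_borel_prob_def)
  have "{a} \<in> null_sets M" for a
    using M by (auto simp: atomless_borel_prob_def null_sets_def emeasure_eq_measure)
  then have "(\<Union>a\<in>F. {a}) \<in> null_sets M"
    using \<open>finite F\<close> by (intro null_sets.finite_UN)
  then show "F \<in> null_sets M" by simp
qed auto

lemma borel_measurable_PiM_component:
  assumes "a \<in> I" "sets (M a) = sets borel"
  shows "(\<lambda>x. x a) \<in> borel_measurable (PiM I M)"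
  using measurable_component_singleton[OF assms(1), of M] assms(2) measurable_cong_sets by blast

subsection \<open>Polynomials in finitely many real variables\<close>

inductive poly_in_vars :: "'i set \<Rightarrow> (('i \<Rightarrow> real) \<Rightarrow> real) \<Rightarrow> bool" for I where
  poly_in_vars_const: "poly_in_vars I (\<lambda>x. c)"
| poly_in_vars_var: "i \<in> I \<Longrightarrow> poly_in_vars I (\<lambda>x. x i)"
| poly_in_vars_add: "poly_in_vars I p \<Longrightarrow> poly_in_vars I q \<Longrightarrow> poly_in_vars I (\<lambda>x. p x + q x)"
| poly_in_vars_mult: "poly_in_vars I p \<Longrightarrow> poly_in_vars I q \<Longrightarrow> poly_in_vars I (\<lambda>x. p x * q x)"

lemma poly_in_vars_sum:
  "(\<And>s. s \<in> S \<Longrightarrow> poly_in_vars I (f s)) \<Longrightarrow> poly_in_vars I (\<lambda>x. \<Sum>s\<in>S. f s x)"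
  by (induction S rule: infinite_finite_induct) (auto intro: poly_in_vars.intros)

lemma poly_in_vars_prod:
  "(\<And>s. s \<in> S \<Longrightarrow> poly_in_vars I (f s)) \<Longrightarrow> poly_in_vars I (\<lambda>x. \<Prod>s\<in>S. f s x)"
  by (induction S rule: infinite_finite_induct) (auto intro: poly_in_vars.intros)

lemma poly_in_vars_cong: "poly_in_vars I p \<Longrightarrow> (\<And>i. i \<in> I \<Longrightarrow> x i = y i) \<Longrightarrow> p x = p y"
  by (induction rule: poly_in_vars.induct) auto

lemma borel_measurable_poly_in_vars:
  assumes "poly_in_vars I p" "I \<subseteq> J" "\<And>i. sets (M i) = sets borel"
  shows "p \<in> borel_measurable (PiM J M)"
  using assms(1)
  by (induction rule: poly_in_vars.induct) (use assms(2,3) in \<open>auto intro: borel_measurable_PiM_component\<close>)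

lemma poly_in_vars_insert_decomp:
  assumes "poly_in_vars (insert i I) p"
  shows "\<exists>P. (\<forall>n. poly_in_vars I (\<lambda>x. coeff (P x) n)) \<and> (\<forall>x. p x = poly (P x) (x i))"
  using assms
proof (induction rule: poly_in_vars.induct)
  case (poly_in_vars_const c)
  show ?case
    by (rule exI[of _ "\<lambda>x. [:c:]"]) (auto simp: coeff_pCons poly_in_vars.intros split: nat.split)
next
  case (poly_in_vars_var j)
  show ?case
  proof (cases "j = i")
    case True
    show ?thesis
      by (rule exI[of _ "\<lambda>x. [:0, 1:]"]) (auto simp: True coeff_pCons poly_in_vars.intros split: nat.split)
  next
    case False
    with poly_in_vars_var have "j \<in> I" by auto
    then have "poly_in_vars I (\<lambda>x. coeff [:x j:] n)" for n
      by (cases n) (auto intro: poly_in_vars.intros)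
    then show ?thesis by (intro exI[of _ "\<lambda>x. [:x j:]"]) auto
  qed
next
  case (poly_in_vars_add p q)
  then obtain P Q where "\<forall>n. poly_in_vars I (\<lambda>x. coeff (P x) n)" "\<forall>x. p x = poly (P x) (x i)"
    "\<forall>n. poly_in_vars I (\<lambda>x. coeff (Q x) n)" "\<forall>x. q x = poly (Q x) (x i)" by blast
  then show ?case
    by (intro exI[of _ "\<lambda>x. P x + Q x"]) (auto intro: poly_in_vars.intros)
next
  case (poly_in_vars_mult p q)
  then obtain P Q where "\<forall>n. poly_in_vars I (\<lambda>x. coeff (P x) n)" "\<forall>x. p x = poly (P x) (x i)"
    "\<forall>n. poly_in_vars I (\<lambda>x. coeff (Q x) n)" "\<forall>x. q x = poly (Q x) (x i)" by blast
  then show ?case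
    by (intro exI[of _ "\<lambda>x. P x * Q x"])
       (auto simp: coeff_mult intro!: poly_in_vars_sum poly_in_vars.intros)
qed

text \<open>Induction on the variables: a polynomial that is nonzero somewhere is, for almost every value
  of the remaining variables, a nonzero univariate polynomial in the last one, hence nonzero off a
  finite set; Fubini combines the two statements.\<close>

lemma AE_poly_in_vars_nonzero:
  fixes M :: "'i \<Rightarrow> real measure"
  assumes "finite I" and M: "\<And>i. atomless_borel_prob (M i)"
  shows "poly_in_vars I p \<Longrightarrow> p x0 \<noteq> 0 \<Longrightarrow> AE x in PiM I M. p x \<noteq> 0"
  using assms(1)
proof (induction I arbitrary: p x0 rule: finite_induct)
  case empty
  have "p x = p x0" for x by (rule poly_in_vars_cong[OF empty.prems(1)]) simp
  with empty.prems(2) show ?case by (intro AE_I2) metis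
next
  case (insert i I)
  have Mprob: "prob_space (M j)" and Msets: "sets (M j) = sets borel" for j
    using M by (auto simp: atomless_borel_prob_def)
  obtain P where P: "\<And>n. poly_in_vars I (\<lambda>x. coeff (P x) n)" "\<And>x. p x = poly (P x) (x i)"
    using poly_in_vars_insert_decomp[OF insert.prems(1)] by blast
  have P_upd: "P (X(i := t)) = P X" for X t
    by (rule poly_eqI, rule poly_in_vars_cong[OF P(1)]) (use insert.hyps(2) in auto)
  have "P x0 \<noteq> 0" using insert.prems(2) P(2)[of x0] by auto
  then obtain n where "coeff (P x0) n \<noteq> 0" by (metis leading_coeff_0_iff)
  from insert.IH[OF P(1) this] have "AE X in PiM I M. AE t in M i. p (X(i := t)) \<noteq> 0"
  proof eventually_elim
    case (elim X)
    then have "finite {t. poly (P X) t = 0}" by (intro poly_roots_finite) auto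
    from AE_not_in_finite[OF M this] show ?case
      by eventually_elim (simp add: P(2) P_upd)
  qed
  interpret pair_sigma_finite "M i" "PiM I M"
    using Mprob by (intro pair_sigma_finite.intro prob_space_imp_sigma_finite prob_space_PiM)
  have upd: "(\<lambda>(t, X). X(i := t)) \<in> M i \<Otimes>\<^sub>M PiM I M \<rightarrow>\<^sub>M PiM (insert i I) M"
    by measurable
  have p_meas: "p \<in> borel_measurable (PiM (insert i I) M)"
    by (rule borel_measurable_poly_in_vars[OF insert.prems(1) subset_refl Msets])
  have S: "{x \<in> space (M i \<Otimes>\<^sub>M PiM I M). p ((snd x)(i := fst x)) \<noteq> 0} \<in> sets (M i \<Otimes>\<^sub>M PiM I M)"
    using measurable_comp[OF upd p_meas] by (simp add: comp_def case_prod_beta)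
  with \<open>AE X in PiM I M. AE t in M i. p (X(i := t)) \<noteq> 0\<close>
  have "AE t in M i. AE X in PiM I M. p (X(i := t)) \<noteq> 0"
    using AE_commute[of "\<lambda>t X. p (X(i := t)) \<noteq> 0"] by blast
  then have "AE x in M i \<Otimes>\<^sub>M PiM I M. p ((\<lambda>(t, X). X(i := t)) x) \<noteq> 0"
    by (auto simp: case_prod_beta intro: AE_pair_measure[OF S])
  then have "AE x in distr (M i \<Otimes>\<^sub>M PiM I M) (PiM (insert i I) M) (\<lambda>(t, X). X(i := t)). p x \<noteq> 0"
    by (subst AE_distr_iff[OF upd]) (use p_meas in measurable)
  also have "distr (M i \<Otimes>\<^sub>M PiM I M) (PiM (insert i I) M) (\<lambda>(t, X). X(i := t)) = PiM (insert i I) M"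
    using Mprob by (intro distr_pair_PiM_eq_PiM)
  finally show ?case .
qed

lemma AE_pair_PiM_nonzero:
  fixes f :: "('i \<Rightarrow> real) \<Rightarrow> ('j \<Rightarrow> real) \<Rightarrow> real"
  assumes "finite I" "finite J"
    and M: "\<And>i. atomless_borel_prob (M i)" and N: "\<And>j. atomless_borel_prob (N j)"
    and poly_W: "\<And>V. poly_in_vars I (\<lambda>W. f W V)" and poly_V: "\<And>W. poly_in_vars J (\<lambda>V. f W V)"
    and "f W0 V0 \<noteq> 0"
    and f_meas: "(\<lambda>x. f (fst x) (snd x)) \<in> borel_measurable (PiM I M \<Otimes>\<^sub>M PiM J N)"
  shows "AE x in PiM I M \<Otimes>\<^sub>M PiM J N. f (fst x) (snd x) \<noteq> 0"
proof -
  have "AE W in PiM I M. f W V0 \<noteq> 0"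
    by (rule AE_poly_in_vars_nonzero[OF \<open>finite I\<close> M poly_W \<open>f W0 V0 \<noteq> 0\<close>])
  then have "AE W in PiM I M. AE V in PiM J N. f W V \<noteq> 0"
    by eventually_elim (rule AE_poly_in_vars_nonzero[OF \<open>finite J\<close> N poly_V])
  interpret pair_sigma_finite "PiM I M" "PiM J N"
    using M N by (intro pair_sigma_finite.intro prob_space_imp_sigma_finite prob_space_PiM)
                 (auto simp: atomless_borel_prob_def)
  have "{x \<in> space (PiM I M \<Otimes>\<^sub>M PiM J N). f (fst x) (snd x) \<noteq> 0} \<in> sets (PiM I M \<Otimes>\<^sub>M PiM J N)"
    using f_meas by measurable
  then show ?thesis
    by (rule AE_pair_measure) (simp add: \<open>AE W in PiM I M. AE V in PiM J N. f W V \<noteq> 0\<close>)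
qed

subsection \<open>The linear system for the first-layer scales\<close>

text \<open>Row \<open>i * d + j\<close> of this matrix is the equation \<open>\<Sum>\<^sub>k V\<^sub>i\<^sub>k W\<^sub>k\<^sub>j \<gamma>\<^sub>k = c\<^sub>i\<^sub>j\<close>.\<close>

definition scale_system_mat :: "nat \<Rightarrow> (nat \<times> nat \<Rightarrow> real) \<Rightarrow> (nat \<times> nat \<Rightarrow> real) \<Rightarrow> real mat" where
  "scale_system_mat d W V = Matrix.mat (d^2) (d^2) (\<lambda>(r, k). V (r div d, k) * W (k, r mod d))"

lemma scale_system_mat_carrier: "scale_system_mat d W V \<in> carrier_mat (d^2) (d^2)"
  unfolding scale_system_mat_def by simp

lemma div_mod_less_of_less_square:
  fixes r d :: nat
  assumes "r < d^2"
  shows "r div d < d" "r mod d < d"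
proof -
  from assms have "d > 0" by (cases d) auto
  then show "r mod d < d" by simp
  show "r div d < d" using assms by (simp add: power2_eq_square less_mult_imp_div_less)
qed

lemma det_scale_system_mat:
  "det (scale_system_mat d W V) = (\<Sum>p | p permutes {0..<d^2}. of_int (sign p) *
    (\<Prod>r=0..<d^2. V (r div d, p r) * W (p r, r mod d)))"
  by (subst det_def'[OF scale_system_mat_carrier])
     (auto intro!: sum.cong prod.cong simp: scale_system_mat_def permutes_in_image)

lemma poly_in_vars_det_scale_system_mat_W:
  "poly_in_vars ({0..<d^2} \<times> {0..<d}) (\<lambda>W. det (scale_system_mat d W V))"
  unfolding det_scale_system_mat
  by (intro poly_in_vars_sum poly_in_vars_prod poly_in_vars.intros)
     (auto simp: permutes_in_image div_mod_less_of_less_square)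

lemma poly_in_vars_det_scale_system_mat_V:
  "poly_in_vars ({0..<d} \<times> {0..<d^2}) (\<lambda>V. det (scale_system_mat d W V))"
  unfolding det_scale_system_mat
  by (intro poly_in_vars_sum poly_in_vars_prod poly_in_vars.intros)
     (auto simp: permutes_in_image div_mod_less_of_less_square)

lemma borel_measurable_det_scale_system_mat:
  assumes "sets M = sets borel" "sets N = sets borel"
  shows "(\<lambda>WV. det (scale_system_mat d (fst WV) (snd WV)))
    \<in> borel_measurable (PiM ({0..<d^2} \<times> {0..<d}) (\<lambda>_. M) \<Otimes>\<^sub>M PiM ({0..<d} \<times> {0..<d^2}) (\<lambda>_. N))"
  unfolding det_scale_system_mat
  by (intro borel_measurable_sum borel_measurable_prod borel_measurable_times borel_measurable_const
        measurable_compose[OF measurable_fst borel_measurable_PiM_component]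
        measurable_compose[OF measurable_snd borel_measurable_PiM_component])
     (auto simp: permutes_in_image div_mod_less_of_less_square assms)

lemma scale_system_mat_selectors:
  "scale_system_mat d (\<lambda>(k, j). if k mod d = j then 1 else 0) (\<lambda>(i, k). if k div d = i then 1 else 0)
    = 1\<^sub>m (d^2)"
proof (rule eq_matI)
  fix r k assume "r < dim_row (1\<^sub>m (d^2) :: real mat)" "k < dim_col (1\<^sub>m (d^2) :: real mat)"
  moreover have "(k div d = r div d \<and> r mod d = k mod d) \<longleftrightarrow> r = k"
    by (metis div_mult_mod_eq)
  ultimately show "scale_system_mat d (\<lambda>(k, j). if k mod d = j then 1 else 0)
      (\<lambda>(i, k). if k div d = i then 1 else 0) $$ (r, k) = 1\<^sub>m (d^2) $$ (r, k)"
    by (auto simp: scale_system_mat_def)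
qed (auto simp: scale_system_mat_def)

lemma det_scale_system_mat_not_identically_zero: "\<exists>W V. det (scale_system_mat d W V) \<noteq> 0"
  by (metis scale_system_mat_selectors det_one zero_neq_one)

lemma scale_system_solvable:
  assumes "det (scale_system_mat d W V) \<noteq> 0"
  shows "\<exists>g. \<forall>i<d. \<forall>j<d. (\<Sum>k<d^2. V (i, k) * W (k, j) * g k) = c i j"
proof -
  let ?A = "scale_system_mat d W V"
  from det_non_zero_imp_unit[OF scale_system_mat_carrier assms, unfolded Units_def, of "()"]
  obtain B where B: "B \<in> carrier_mat (d^2) (d^2)" and AB: "?A * B = 1\<^sub>m (d^2)"
    by (auto simp: ring_mat_def)
  define t where "t = Matrix.vec (d^2) (\<lambda>r. c (r div d) (r mod d))"
  define g where "g = B *\<^sub>v t"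
  have t: "t \<in> carrier_vec (d^2)" by (simp add: t_def)
  have "?A *\<^sub>v g = t"
    unfolding g_def using assoc_mult_mat_vec[OF scale_system_mat_carrier[of d W V] B t] AB t
    by (simp add: one_mult_mat_vec)
  have "dim_vec g = d^2" using B by (simp add: g_def)
  have row: "(\<Sum>k<d^2. V (r div d, k) * W (k, r mod d) * g $ k) = c (r div d) (r mod d)"
    if "r < d^2" for r
    using arg_cong[OF \<open>?A *\<^sub>v g = t\<close>, of "\<lambda>v. v $ r"] that \<open>dim_vec g = d^2\<close>
    by (simp add: t_def scale_system_mat_def scalar_prod_def atLeast0LessThan mult.assoc)
  show ?thesis
  proof (intro exI[of _ "\<lambda>k. g $ k"] allI impI)
    fix i j assume ij: "i < d" "j < d"
    have "i * d + j < (i + 1) * d" using ij by simp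
    also have "\<dots> \<le> d * d" using ij by (intro mult_le_mono1) simp
    finally have "i * d + j < d^2" by (simp add: power2_eq_square)
    with row[of "i * d + j"] ij show "(\<Sum>k<d^2. V (i, k) * W (k, j) * g $ k) = c i j" by simp
  qed
qed

lemma abs_le_one_of_sqrt_sum_squares_le_one:
  fixes x :: "nat \<Rightarrow> real"
  assumes "sqrt (\<Sum>j<d. (x j)^2) \<le> 1" "j < d"
  shows "\<bar>x j\<bar> \<le> 1"
proof -
  have "(x j)^2 \<le> (\<Sum>j<d. (x j)^2)" by (rule member_le_sum) (use assms(2) in auto)
  also have "\<dots> \<le> 1" using assms(1) by simp
  finally show ?thesis by (simp add: abs_square_le_1)
qed

lemma abs_sum_mult_le_sum_abs:
  fixes w x :: "'a \<Rightarrow> real"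
  assumes "\<And>j. j \<in> A \<Longrightarrow> \<bar>x j\<bar> \<le> 1"
  shows "\<bar>\<Sum>j\<in>A. w j * x j\<bar> \<le> (\<Sum>j\<in>A. \<bar>w j\<bar>)"
proof -
  have "\<bar>\<Sum>j\<in>A. w j * x j\<bar> \<le> (\<Sum>j\<in>A. \<bar>w j * x j\<bar>)" by (rule sum_abs)
  also have "\<dots> \<le> (\<Sum>j\<in>A. \<bar>w j\<bar>)"
    using assms by (intro sum_mono) (simp add: abs_mult mult_left_le)
  finally show ?thesis .
qed

lemma relu_affine_with_margin:
  fixes a g m s R b :: real
  assumes "\<bar>a\<bar> \<le> R" "\<bar>g\<bar> * (R + \<bar>m\<bar>) / \<bar>s\<bar> \<le> b"
  shows "relu (g * ((a - m) / s) + b) = g * ((a - m) / s) + b"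
proof -
  have "\<bar>g * ((a - m) / s)\<bar> = \<bar>g\<bar> * \<bar>a - m\<bar> / \<bar>s\<bar>" by (simp add: abs_mult)
  also have "\<dots> \<le> \<bar>g\<bar> * (R + \<bar>m\<bar>) / \<bar>s\<bar>"
    using assms(1) by (intro divide_right_mono mult_left_mono) auto
  finally have "\<bar>g * ((a - m) / s)\<bar> \<le> \<bar>g\<bar> * (R + \<bar>m\<bar>) / \<bar>s\<bar>" .
  from abs_le_D2[OF this] assms(2) have "0 \<le> g * ((a - m) / s) + b" by linarith
  then show ?thesis by (simp add: relu_def)
qed

lemma bn_two_layer_eq_one_layer:
  assumes "s \<noteq> 0" "s' \<noteq> 0"
    and scales: "\<forall>i<d. \<forall>j<d. (\<Sum>k<d^2. V (i, k) * W (k, j) * g k) = s * gs i * Ws (i, j)"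
  shows "\<exists>b g' b'. \<forall>x. sqrt (\<Sum>j<d. (x j)^2) \<le> 1 \<longrightarrow>
           (\<forall>i<d. bn_two_layer d W V mu s mu' s' g b g' b' x i = one_layer d Ws gs bs x i)"
proof -
  define R where "R k = (\<Sum>j<d. \<bar>W (k, j)\<bar>)" for k
  define b where "b k = \<bar>g k\<bar> * (R k + \<bar>mu k\<bar>) / \<bar>s\<bar> + 1" for k
  define C where "C i = (\<Sum>k<d^2. V (i, k) * (b k - g k * mu k / s))" for i
  have "bn_two_layer d W V mu s mu' s' g b (\<lambda>_. s') (\<lambda>i. bs i + mu' i - C i) x i
          = one_layer d Ws gs bs x i"
    if x: "sqrt (\<Sum>j<d. (x j)^2) \<le> 1" and i: "i < d" for x i
  proof -
    define L where "L k = (\<Sum>j<d. W (k, j) * x j)" for k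
    have linear: "relu (g k * ((L k - mu k) / s) + b k) = g k * ((L k - mu k) / s) + b k" for k
    proof (rule relu_affine_with_margin)
      show "\<bar>L k\<bar> \<le> R k" unfolding L_def R_def
        by (intro abs_sum_mult_le_sum_abs abs_le_one_of_sqrt_sum_squares_le_one[OF x]) simp
    qed (simp add: b_def)
    have "(\<Sum>k<d^2. V (i, k) * g k * L k) = (\<Sum>j<d. x j * (\<Sum>k<d^2. V (i, k) * W (k, j) * g k))"
      unfolding L_def by (simp add: sum_distrib_left sum_distrib_right mult_ac sum.swap[of _ "{..<d}"])
    also have "\<dots> = s * (gs i * (\<Sum>j<d. Ws (i, j) * x j))"
      using scales i by (simp add: sum_distrib_left mult_ac)
    finally have linear_part: "(\<Sum>k<d^2. V (i, k) * g k * L k) / s = gs i * (\<Sum>j<d. Ws (i, j) * x j)"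
      using \<open>s \<noteq> 0\<close> by simp
    have "(\<Sum>k<d^2. V (i, k) * (g k * ((L k - mu k) / s) + b k))
        = (\<Sum>k<d^2. V (i, k) * g k * L k / s + V (i, k) * (b k - g k * mu k / s))"
      using \<open>s \<noteq> 0\<close> by (intro sum.cong) (auto simp: field_simps)
    also have "\<dots> = gs i * (\<Sum>j<d. Ws (i, j) * x j) + C i"
      by (simp add: sum.distrib C_def flip: linear_part sum_divide_distrib)
    finally show ?thesis
      using \<open>s' \<noteq> 0\<close> unfolding bn_two_layer_def one_layer_def Let_def L_def[symmetric] linear
      by simp
  qed
  then show ?thesis by blast
qed

theorem lemma4p1:
  fixes d :: nat and D1 D2 :: "real measure"
    and Ws :: "nat \<times> nat \<Rightarrow> real" and gs bs :: "nat \<Rightarrow> real"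
    and mu mu' :: "nat \<Rightarrow> real" and s s' :: real
  assumes "cont_bounded_dist D1" and "cont_bounded_dist D2"
    and "s \<noteq> 0" and "s' \<noteq> 0"
  shows "AE WV in (PiM ({0..<d^2} \<times> {0..<d}) (\<lambda>_. D1) \<Otimes>\<^sub>M PiM ({0..<d} \<times> {0..<d^2}) (\<lambda>_. D2)).
           \<exists>g b g' b'. \<forall>x. sqrt (\<Sum>j<d. (x j)^2) \<le> 1 \<longrightarrow>
             (\<forall>i<d. bn_two_layer d (fst WV) (snd WV) mu s mu' s' g b g' b' x i
                     = one_layer d Ws gs bs x i)"
proof -
  have D: "atomless_borel_prob D1" "atomless_borel_prob D2"
    using assms(1,2) by (auto intro: cont_bounded_dist_atomless)
  have "AE WV in PiM ({0..<d^2} \<times> {0..<d}) (\<lambda>_. D1) \<Otimes>\<^sub>M PiM ({0..<d} \<times> {0..<d^2}) (\<lambda>_. D2).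
          det (scale_system_mat d (fst WV) (snd WV)) \<noteq> 0"
    using D det_scale_system_mat_not_identically_zero[of d]
    by (elim exE, intro AE_pair_PiM_nonzero poly_in_vars_det_scale_system_mat_W
          poly_in_vars_det_scale_system_mat_V borel_measurable_det_scale_system_mat)
       (auto simp: atomless_borel_prob_def)
  then show ?thesis
  proof eventually_elim
    case (elim WV)
    from scale_system_solvable[OF this, of "\<lambda>i j. s * gs i * Ws (i, j)"]
    obtain g where "\<forall>i<d. \<forall>j<d. (\<Sum>k<d^2. snd WV (i, k) * fst WV (k, j) * g k) = s * gs i * Ws (i, j)"
      by blast
    from bn_two_layer_eq_one_layer[OF assms(3,4) this] show ?case by blast
  qed
qed

end
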